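(* The law $\mathrm{x}\simeq\mathrm{x}\diamond((\mathrm{y}\diamond\mathrm{z})\diamond(\mathrm{x}\diamond\mathrm{z}))$ does not imply the law $\mathrm{x}\diamond\mathrm{y}\simeq\mathrm{x}\diamond(\mathrm{y}\diamond(\mathrm{x}\diamond\mathrm{y}))$.
   Context: A magma is a set with a binary operation $\diamond$; it satisfies a law if the identity holds for all assignments of variables. A law implies another if every magma satisfying the first satisfies the second. *)

theory Defs
  imports Main
begin

definition magma :: "'a set \<Rightarrow> ('a \<Rightarrow> 'a \<Rightarrow> 'a) \<Rightarrow> bool" where
  "magma M op \<longleftrightarrow> (\<forall>x\<in>M. \<forall>y\<in>M. op x y \<in> M)"

definition law1 :: "'a set \<Rightarrow> ('a \<Rightarrow> 'a \<Rightarrow> 'a) \<Rightarrow> bool" where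
  "law1 M op \<longleftrightarrow> (\<forall>x\<in>M. \<forall>y\<in>M. \<forall>z\<in>M. x = op x (op (op y z) (op x z)))"

definition law2 :: "'a set \<Rightarrow> ('a \<Rightarrow> 'a \<Rightarrow> 'a) \<Rightarrow> bool" where
  "law2 M op \<longleftrightarrow> (\<forall>x\<in>M. \<forall>y\<in>M. op x y = op x (op y (op x y)))"

end

theory Submission
  imports Defs "HOL-Library.Countable"
begin

text \<open>The counter-model consists of binary terms over two generators \<open>A\<close>, \<open>B\<close>. The relation
\<open>absorbs s t\<close>, read \<open>s \<diamond> t = s\<close>, is generated by four rules, two of which are instances of
law 1; the product of \<open>s\<close> and \<open>t\<close> is \<open>s\<close> if \<open>s\<close> absorbs \<open>t\<close> and the formal term \<open>App s t\<close>
otherwise, on the normal terms (those without an absorbed subproduct). Law 1 says that \<open>x\<close>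
absorbs \<open>(y \<diamond> z) \<diamond> (x \<diamond> z)\<close>; according to which inner products collapse, this is either a rule
or a converse absorption, and the converses follow from the four possible shapes of an
absorbing pair. Law 2 fails at \<open>x = A\<close>, \<open>y = B\<close>, as neither \<open>A\<close> absorbs \<open>B\<close> nor \<open>B\<close> absorbs
\<open>App A B\<close>. The terms are countable, so the model transports to the natural numbers.\<close>

definition transport_op :: "('a \<Rightarrow> 'b) \<Rightarrow> 'a set \<Rightarrow> ('a \<Rightarrow> 'a \<Rightarrow> 'a) \<Rightarrow> 'b \<Rightarrow> 'b \<Rightarrow> 'b" where
  "transport_op e M op m n = e (op (inv_into M e m) (inv_into M e n))"

lemma transport_op_image:
  "inj_on e M \<Longrightarrow> x \<in> M \<Longrightarrow> y \<in> M \<Longrightarrow> transport_op e M op (e x) (e y) = e (op x y)"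
  by (simp add: transport_op_def)

lemma magma_transport:
  "inj_on e M \<Longrightarrow> magma M op \<Longrightarrow> magma (e ` M) (transport_op e M op)"
  by (auto simp: magma_def transport_op_image)

lemma law1_transport_iff:
  assumes "inj_on e M" "magma M op"
  shows "law1 (e ` M) (transport_op e M op) \<longleftrightarrow> law1 M op"
  using assms by (auto simp: law1_def magma_def transport_op_image inj_on_eq_iff)

lemma law2_transport_iff:
  assumes "inj_on e M" "magma M op"
  shows "law2 (e ` M) (transport_op e M op) \<longleftrightarrow> law2 M op"
  using assms by (auto simp: law2_def magma_def transport_op_image inj_on_eq_iff)

datatype tm = A | B | App tm tm

instance tm :: countable
  by countable_datatype

text \<open>The premise \<open>(\<exists>v. s = App v w) \<or> absorbs s w\<close> says that \<open>s\<close> is a product with right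
factor \<open>w\<close>: a formal one, or \<open>s \<diamond> w = s\<close>.\<close>

inductive absorbs :: "tm \<Rightarrow> tm \<Rightarrow> bool" where
  absorbs_App: "absorbs (App u t) t"
| absorbs_nested:
    "(\<exists>v. u = App v w) \<or> absorbs u w \<Longrightarrow> absorbs t (App t w) \<Longrightarrow> absorbs (App u (App t w)) t"
| absorbs_law1: "(\<exists>v. s = App v w) \<or> absorbs s w \<Longrightarrow> absorbs x (App s (App x w))"
| absorbs_common: "absorbs x z \<Longrightarrow> absorbs y z \<Longrightarrow> absorbs x (App y x)"

fun normal :: "tm \<Rightarrow> bool" where
  "normal A \<longleftrightarrow> True"
| "normal B \<longleftrightarrow> True"
| "normal (App s t) \<longleftrightarrow> normal s \<and> normal t \<and> \<not> absorbs s t"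

definition mult :: "tm \<Rightarrow> tm \<Rightarrow> tm" where
  "mult s t = (if absorbs s t then s else App s t)"

lemma absorbs_shape:
  "absorbs x t \<Longrightarrow>
    (\<exists>s. t = App s x) \<or> (\<exists>s w. t = App s (App x w)) \<or> (\<exists>u. x = App u t) \<or> (\<exists>u w. x = App u (App t w))"
  by (induction rule: absorbs.induct) auto

lemma absorbs_irrefl: "\<not> absorbs t t"
  using absorbs_shape[of t t] by (auto dest: arg_cong[where f=size])

lemma absorbs_right_factor_iff: "absorbs x (App s x) \<longleftrightarrow> (\<exists>z. absorbs x z \<and> absorbs s z)"
  by (auto elim: absorbs.cases intro: absorbs_common dest: arg_cong[where f=size])

lemma absorbs_law1_iff: "absorbs x (App s (App x w)) \<longleftrightarrow> (\<exists>v. s = App v w) \<or> absorbs s w"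
  by (auto elim: absorbs.cases intro: absorbs_law1 dest: arg_cong[where f=size])

lemma absorbs_nested_iff:
  "absorbs (App u (App t w)) t \<longleftrightarrow> ((\<exists>v. u = App v w) \<or> absorbs u w) \<and> absorbs t (App t w)"
  by (auto elim: absorbs.cases intro: absorbs_nested dest: arg_cong[where f=size])

lemma absorbs_App_self: "absorbs x (App x x)"
  using absorbs_common[OF absorbs_law1 absorbs_law1] by blast

lemma not_absorbs_App_same_right: "\<not> absorbs (App y z) (App x z)"
  using absorbs_shape[of "App y z" "App x z"] by (auto dest: arg_cong[where f=size])

lemma absorbs_converse_App:
  "absorbs x z \<Longrightarrow> absorbs (App y z) x \<Longrightarrow> absorbs x (App y z)"
  using absorbs_shape[of "App y z" x] absorbs_shape[of x z]
  by (auto simp: absorbs_law1_iff absorbs_nested_iff absorbs_irrefl intro: absorbs_App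
      dest: arg_cong[where f=size])

lemma absorbs_converse_App_right:
  "normal z \<Longrightarrow> \<not> absorbs x z \<Longrightarrow> absorbs y z \<Longrightarrow> absorbs y (App x z) \<Longrightarrow> absorbs x y"
  using absorbs_shape[of y "App x z"] absorbs_shape[of y z]
  by (auto simp: absorbs_law1_iff absorbs_nested_iff absorbs_irrefl intro: absorbs_App absorbs_law1
      dest: arg_cong[where f=size])

lemma absorbs_converse_common:
  assumes "normal x" "absorbs x z" "absorbs y z" "absorbs y x"
  shows "absorbs x y"
proof -
  from absorbs_shape[OF \<open>absorbs y x\<close>] consider
      (right) s where "x = App s y"
    | (law1) s w where "x = App s (App y w)"
    | (common) u where "y = App u x"
    | (nested) u w where "y = App u (App x w)"
    by blast
  then show ?thesis
  proof cases
    case right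
    then show ?thesis by (simp add: absorbs_App)
  next
    case (law1 s w)
    have "(\<exists>v. s = App v w) \<or> absorbs s w"
      using law1 \<open>absorbs y x\<close> by (simp add: absorbs_law1_iff)
    moreover have "absorbs y (App y w)"
      \<comment> \<open>the one use of \<open>normal x\<close>: it excludes \<open>x = App y (App y w)\<close>\<close>
      using law1 assms absorbs_shape[of y z] absorbs_shape[of x z]
      by (auto simp: absorbs_law1_iff absorbs_irrefl intro: absorbs_App dest: arg_cong[where f=size])
    ultimately show ?thesis using law1 by (simp add: absorbs_nested)
  next
    case (common u)
    from absorbs_shape[OF \<open>absorbs y z\<close>] consider
        t where "z = App t y"
      | t w where "z = App t (App y w)"
      | "x = z"
      | w where "x = App z w"
      using common by auto
    then show ?thesis
    proof cases
      case 1
      then have "u = x"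
        using common absorbs_shape[OF \<open>absorbs x z\<close>] by (auto dest: arg_cong[where f=size])
      then show ?thesis using common absorbs_App_self by simp
    next
      case 2
      then show ?thesis
        using common absorbs_shape[OF \<open>absorbs x z\<close>] by (auto dest: arg_cong[where f=size])
    next
      case 3
      then show ?thesis using \<open>absorbs x z\<close> absorbs_irrefl by simp
    next
      case (4 w)
      then have "absorbs u w"
        using common \<open>absorbs y z\<close> by (auto simp: absorbs_nested_iff intro: absorbs_App)
      moreover have "absorbs x w" using 4 absorbs_App by simp
      ultimately show ?thesis using common absorbs_right_factor_iff by blast
    qed
  next
    case (nested u w)
    then show ?thesis using \<open>absorbs y x\<close> by (simp add: absorbs_law1_iff absorbs_nested_iff)
  qed
qed

lemma absorbs_law1_mult:
  assumes "normal x" "normal z"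
  shows "absorbs x (mult (mult y z) (mult x z))"
proof (cases "absorbs x z"; cases "absorbs y z")
  assume xz: "absorbs x z" and yz: "absorbs y z"
  show ?thesis
    using xz yz absorbs_converse_common[OF \<open>normal x\<close> xz yz] absorbs_common[OF xz yz]
    by (simp add: mult_def)
next
  assume xz: "absorbs x z" and "\<not> absorbs y z"
  then show ?thesis
    using absorbs_converse_App[OF xz] absorbs_common[OF xz absorbs_App]
    by (simp add: mult_def)
next
  assume "\<not> absorbs x z" and yz: "absorbs y z"
  then show ?thesis
    using absorbs_converse_App_right[OF \<open>normal z\<close> _ yz] absorbs_law1[OF disjI2, OF yz]
    by (simp add: mult_def)
next
  assume "\<not> absorbs x z" "\<not> absorbs y z"
  then show ?thesis
    using not_absorbs_App_same_right absorbs_law1[of "App y z" z x]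
    by (simp add: mult_def)
qed

lemma magma_normal: "magma {t. normal t} mult"
  by (simp add: magma_def mult_def)

lemma law1_normal: "law1 {t. normal t} mult"
  using absorbs_law1_mult by (simp add: law1_def mult_def)

lemma not_law2_normal: "\<not> law2 {t. normal t} mult"
proof -
  have "\<not> absorbs A B"
    using absorbs_shape[of A B] by auto
  moreover have "\<not> absorbs B (App A B)"
  proof
    assume "absorbs B (App A B)"
    then obtain z where "absorbs B z" "absorbs A z"
      by (auto simp: absorbs_right_factor_iff)
    then show False
      using absorbs_shape[of B z] absorbs_shape[of A z] by auto
  qed
  ultimately have "mult A B \<noteq> mult A (mult B (mult A B))"
    by (simp add: mult_def)
  moreover have "normal A" "normal B" by simp_all
  ultimately show ?thesis
    unfolding law2_def by blast
qed

theorem mainTheorem13: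
  shows "\<exists>(M :: nat set) (op :: nat \<Rightarrow> nat \<Rightarrow> nat). magma M op \<and> law1 M op \<and> \<not> law2 M op"
proof -
  define N where "N = {t :: tm. normal t}"
  have "inj_on to_nat N"
    by (simp add: inj_on_def)
  then have "magma (to_nat ` N) (transport_op to_nat N mult)"
    and "law1 (to_nat ` N) (transport_op to_nat N mult)"
    and "\<not> law2 (to_nat ` N) (transport_op to_nat N mult)"
    using magma_normal law1_normal not_law2_normal
    by (simp_all add: N_def magma_transport law1_transport_iff law2_transport_iff)
  then show ?thesis by blast
qed

end
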